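(* Under the assumptions of the convergence setting (loss $0\le\ell\le A$; some $\theta^*$ and $\delta^*>0$ with $\theta^*\cdot\phi^t_{\Delta y}\ge\delta^*$ for all $t$ and $y\in\mathcal{Y}^t$), assume further that $\|\phi(x_t,y)\|_2\le R$ for all $t$ and all $y\in\mathcal{Y}(x_t)$. Then the cumulative hinge loss of the online learning framework satisfies $$\sum_{t=1}^T\mathcal{H}_{\delta_t}(\theta_t,(x_t,y_t))\le 8A\left(\frac{R\|\theta^*\|}{\delta^*}\right)^2.$$
   Context: Each example consists of an input $x_t$ with a finite set $\mathcal{Y}(x_t)$ of feasible outputs and a correct output $y_t\in\mathcal{Y}(x_t)$; a feature map $\phi(x,y)\in\mathbb{R}^F$ is given. Write $\mathcal{Y}^t=\mathcal{Y}(x_t)\setminus\{y_t\}$ and $\phi^t_{\Delta y}=\phi(x_t,y_t)-\phi(x_t,y)$. The framework: $\theta_1=0$; for $t=1,\dots,T$: predict $\hat y_t\in\arg\max_{y\in\mathcal{Y}(x_t)}\theta_t\cdot\phi(x_t,y)$, suffer loss $\delta_t=\ell(y_t,\hat y_t)$, and set $\theta_{t+1}=\arg\min_{\theta'}\|\theta'-\theta_t\|_2^2$ subject to $\theta'\cdot\phi^t_{\Delta y}\ge\delta_t$ for all $y\in\mathcal{Y}^t$. The hinge loss is $\mathcal{H}_{\delta_t}(\theta_t,(x_t,y_t))=\max\bigl(0,\max_{y\in\mathcal{Y}^t}(\delta_t-\theta_t\cdot\phi^t_{\Delta y})\bigr)$. All norms are Euclidean. *)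

theory Defs
  imports "HOL-Analysis.Analysis"
begin

definition dphi :: "('x \<Rightarrow> 'y \<Rightarrow> 'v::real_inner) \<Rightarrow> 'x \<Rightarrow> 'y \<Rightarrow> 'y \<Rightarrow> 'v" where
  "dphi \<phi> x yt y = \<phi> x yt - \<phi> x y"

definition feasible :: "('x \<Rightarrow> 'y \<Rightarrow> 'v::real_inner) \<Rightarrow> 'y set \<Rightarrow> 'x \<Rightarrow> 'y \<Rightarrow> real \<Rightarrow> 'v set" where
  "feasible \<phi> Yx x yt \<delta> = {\<theta>'. \<forall>y\<in>Yx - {yt}. \<theta>' \<bullet> dphi \<phi> x yt y \<ge> \<delta>}"

definition hinge_loss :: "real \<Rightarrow> 'v::real_inner \<Rightarrow> ('x \<Rightarrow> 'y \<Rightarrow> 'v) \<Rightarrow> 'y set \<Rightarrow> 'x \<Rightarrow> 'y \<Rightarrow> real" where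
  "hinge_loss \<delta> \<theta> \<phi> Yx x yt = Max (insert 0 ((\<lambda>y. \<delta> - \<theta> \<bullet> dphi \<phi> x yt y) ` (Yx - {yt})))"

end

theory Submission
  imports Defs
begin

text \<open>Put \<open>u = (2A/\<delta>\<^sup>*) \<theta>\<^sup>*\<close>, which satisfies every constraint with margin \<open>2A\<close>. In round \<open>t\<close>
  with hinge loss \<open>H > 0\<close>, the point \<open>v\<close> dividing the segment from \<open>\<theta>\<^sub>t\<close> to \<open>u\<close> in ratio
  \<open>H : A\<close> is feasible, so the variational inequality of the projection \<open>\<theta>\<^sub>t\<^sub>+\<^sub>1\<close> at \<open>v\<close>
  forces \<open>\<parallel>\<theta>\<^sub>t - u\<parallel>\<^sup>2 - \<parallel>\<theta>\<^sub>t\<^sub>+\<^sub>1 - u\<parallel>\<^sup>2 \<ge> (2A/H) \<parallel>\<theta>\<^sub>t\<^sub>+\<^sub>1 - \<theta>\<^sub>t\<parallel>\<^sup>2\<close>. Feasibility of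
  \<open>\<theta>\<^sub>t\<^sub>+\<^sub>1\<close> and \<open>\<parallel>\<phi>\<^sup>t\<^sub>\<Delta>\<^sub>y\<parallel> \<le> 2R\<close> give \<open>H \<le> 2R \<parallel>\<theta>\<^sub>t\<^sub>+\<^sub>1 - \<theta>\<^sub>t\<parallel>\<close>, so each round decreases
  \<open>\<parallel>\<theta>\<^sub>t - u\<parallel>\<^sup>2\<close> by at least \<open>A H / (2R\<^sup>2)\<close>; telescoping from \<open>\<theta>\<^sub>1 = 0\<close> bounds the total
  hinge loss by \<open>2R\<^sup>2 \<parallel>u\<parallel>\<^sup>2 / A\<close>, which is the claim. For \<open>A = 0\<close> the iterates stay at \<open>0\<close>.\<close>

lemma feasible_eq_INT:
  "feasible \<phi> Yx x yt \<delta> = (\<Inter>y\<in>Yx - {yt}. {\<theta>. inner (dphi \<phi> x yt y) \<theta> \<ge> \<delta>})"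
  by (auto simp: feasible_def inner_commute)

lemma convex_feasible: "convex (feasible \<phi> Yx x yt \<delta>)"
  unfolding feasible_eq_INT by (intro convex_INT ballI convex_halfspace_ge)

lemma closed_feasible: "closed (feasible \<phi> Yx x yt \<delta>)"
  unfolding feasible_eq_INT by (intro closed_INT ballI closed_halfspace_ge)

lemma hinge_loss_nonneg:
  assumes "finite Yx"
  shows "0 \<le> hinge_loss \<delta> \<theta> \<phi> Yx x yt"
  unfolding hinge_loss_def using assms by (intro Max_ge) auto

lemma hinge_loss_ge:
  assumes "finite Yx" "y \<in> Yx - {yt}"
  shows "\<delta> - \<theta> \<bullet> dphi \<phi> x yt y \<le> hinge_loss \<delta> \<theta> \<phi> Yx x yt"
  unfolding hinge_loss_def using assms by (intro Max_ge) auto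

lemma hinge_loss_zero: "hinge_loss 0 0 \<phi> Yx x yt = 0"
  by (simp add: hinge_loss_def image_constant_conv)

lemma hinge_loss_le_dist_feasible:
  assumes "finite Yx" and "\<theta>' \<in> feasible \<phi> Yx x yt \<delta>" and "0 \<le> B"
    and "\<forall>y\<in>Yx - {yt}. norm (dphi \<phi> x yt y) \<le> B"
  shows "hinge_loss \<delta> \<theta> \<phi> Yx x yt \<le> B * norm (\<theta>' - \<theta>)"
proof -
  have "\<delta> - \<theta> \<bullet> dphi \<phi> x yt y \<le> B * norm (\<theta>' - \<theta>)" if y: "y \<in> Yx - {yt}" for y
  proof -
    have "\<delta> - \<theta> \<bullet> dphi \<phi> x yt y \<le> (\<theta>' - \<theta>) \<bullet> dphi \<phi> x yt y"
      using assms(2) y by (auto simp: feasible_def inner_diff_left)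
    also have "\<dots> \<le> norm (\<theta>' - \<theta>) * norm (dphi \<phi> x yt y)"
      by (rule order_trans[OF abs_ge_self Cauchy_Schwarz_ineq2])
    also have "\<dots> \<le> norm (\<theta>' - \<theta>) * B"
      using assms(4) y by (simp add: mult_left_mono)
    finally show ?thesis by (simp add: mult.commute)
  qed
  then show ?thesis
    unfolding hinge_loss_def using assms(1,3) by (subst Max_le_iff) auto
qed

lemma closest_point_toward:
  fixes a x u :: "'a::euclidean_space"
  assumes "convex S" "closed S" "x \<in> S" "\<forall>z\<in>S. dist a x \<le> dist a z"
    and "a + s *\<^sub>R (u - a) \<in> S"
  shows "(1 - s) * (norm (x - a))\<^sup>2 \<le> s * ((x - a) \<bullet> (u - x))"
proof -
  have "(a - x) \<bullet> ((a + s *\<^sub>R (u - a)) - x) \<le> 0"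
    using any_closest_point_dot[OF assms(1-3,5,4)] .
  moreover have "(a + s *\<^sub>R (u - a)) - x = s *\<^sub>R (u - x) - (1 - s) *\<^sub>R (x - a)"
    by (simp add: algebra_simps)
  ultimately show ?thesis
    by (simp add: power2_norm_eq_inner inner_commute algebra_simps)
qed

lemma feasible_toward_margin_point:
  assumes below: "\<forall>y\<in>Yx - {yt}. \<delta> - \<theta> \<bullet> dphi \<phi> x yt y \<le> H"
    and margin: "\<forall>y\<in>Yx - {yt}. 2 * A \<le> u \<bullet> dphi \<phi> x yt y"
    and "\<delta> \<le> A" "0 \<le> A" "0 \<le> H" "0 < H + A"
  shows "\<theta> + (H / (H + A)) *\<^sub>R (u - \<theta>) \<in> feasible \<phi> Yx x yt \<delta>"
  unfolding feasible_def
proof (intro CollectI ballI)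
  fix y assume y: "y \<in> Yx - {yt}"
  define g where "g = dphi \<phi> x yt y"
  have "(H + A) * \<delta> \<le> A * (\<delta> - H) + H * (2 * A)"
    using mult_left_mono[OF assms(3,5)] by (simp add: algebra_simps)
  also have "\<dots> \<le> A * (\<theta> \<bullet> g) + H * (u \<bullet> g)"
    using bspec[OF below y] bspec[OF margin y] assms(4,5)
    by (intro add_mono mult_left_mono) (simp_all add: g_def)
  also have "\<dots> = (H + A) * ((\<theta> + (H / (H + A)) *\<^sub>R (u - \<theta>)) \<bullet> g)"
    using assms(6)
    by (simp add: inner_add_left distrib_left mult.assoc[symmetric]) (simp add: algebra_simps)
  finally show "\<delta> \<le> (\<theta> + (H / (H + A)) *\<^sub>R (u - \<theta>)) \<bullet> g"
    using assms(6) by simp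
qed

lemma hinge_loss_le_progress:
  fixes \<phi> :: "'x \<Rightarrow> 'y \<Rightarrow> 'v::euclidean_space" and Yx :: "'y set" and x yt \<delta>
    and \<theta>t \<theta>n u :: 'v
  defines "C \<equiv> feasible \<phi> Yx x yt \<delta>" and "H \<equiv> hinge_loss \<delta> \<theta>t \<phi> Yx x yt"
  assumes fin: "finite Yx"
    and proj: "\<theta>n \<in> C" "\<forall>z\<in>C. norm (\<theta>n - \<theta>t) \<le> norm (z - \<theta>t)"
    and loss: "0 \<le> \<delta>" "\<delta> \<le> A"
    and margin: "\<forall>y\<in>Yx - {yt}. 2 * A \<le> u \<bullet> dphi \<phi> x yt y"
    and radius: "\<forall>y\<in>Yx - {yt}. norm (dphi \<phi> x yt y) \<le> B" "0 \<le> B"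
  shows "2 * A * H \<le> B\<^sup>2 * ((norm (\<theta>t - u))\<^sup>2 - (norm (\<theta>n - u))\<^sup>2)"
proof -
  define \<Delta> where "\<Delta> = \<theta>n - \<theta>t"
  define D where "D = (norm (\<theta>t - u))\<^sup>2 - (norm (\<theta>n - u))\<^sup>2"
  have closest: "\<forall>z\<in>C. dist \<theta>t \<theta>n \<le> dist \<theta>t z"
    using proj(2) by (simp add: dist_norm norm_minus_commute)
  have toward: "(1 - s) * (norm \<Delta>)\<^sup>2 \<le> s * (\<Delta> \<bullet> (u - \<theta>n))"
    if "\<theta>t + s *\<^sub>R (u - \<theta>t) \<in> C" for s
    using closest_point_toward[OF convex_feasible closed_feasible proj(1)[unfolded C_def]
        closest[unfolded C_def] that[unfolded C_def]]
    by (simp add: \<Delta>_def)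
  have progress: "D = (norm \<Delta>)\<^sup>2 + 2 * (\<Delta> \<bullet> (u - \<theta>n))"
    by (simp add: D_def \<Delta>_def power2_norm_eq_inner inner_commute algebra_simps)
  have "u \<in> C"
    using margin loss by (force simp: C_def feasible_def)
  then have "0 \<le> \<Delta> \<bullet> (u - \<theta>n)"
    using toward[of 1] by simp
  have "0 \<le> H"
    unfolding H_def using fin by (rule hinge_loss_nonneg)
  show ?thesis
  proof (cases "H = 0")
    case True
    with progress \<open>0 \<le> \<Delta> \<bullet> (u - \<theta>n)\<close> show ?thesis by (simp add: D_def)
  next
    case False
    with \<open>0 \<le> H\<close> loss have H: "0 < H" "0 < H + A" by auto
    have "\<forall>y\<in>Yx - {yt}. \<delta> - \<theta>t \<bullet> dphi \<phi> x yt y \<le> H"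
      unfolding H_def by (simp add: hinge_loss_ge[OF fin])
    then have "\<theta>t + (H / (H + A)) *\<^sub>R (u - \<theta>t) \<in> C"
      unfolding C_def using margin loss H by (intro feasible_toward_margin_point) auto
    from toward[OF this] H
    have "(H + A) * (A * (norm \<Delta>)\<^sup>2) \<le> (H + A) * (H * (\<Delta> \<bullet> (u - \<theta>n)))"
      by (simp add: field_simps)
    with H have "A * (norm \<Delta>)\<^sup>2 \<le> H * (\<Delta> \<bullet> (u - \<theta>n))"
      by (simp only: mult_le_cancel_left_pos)
    moreover have "0 \<le> H * (norm \<Delta>)\<^sup>2"
      using H by simp
    ultimately have gain: "2 * (A * (norm \<Delta>)\<^sup>2) \<le> H * D"
      unfolding progress distrib_left by linarith
    have "H\<^sup>2 \<le> B\<^sup>2 * (norm \<Delta>)\<^sup>2"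
      using hinge_loss_le_dist_feasible[OF fin proj(1)[unfolded C_def] radius(2,1)] \<open>0 \<le> H\<close>
      by (simp add: H_def \<Delta>_def power_mono flip: power_mult_distrib)
    then have "2 * A * H\<^sup>2 \<le> 2 * A * (B\<^sup>2 * (norm \<Delta>)\<^sup>2)"
      using loss by (intro mult_left_mono) auto
    then have "H * (2 * A * H) \<le> 2 * A * (B\<^sup>2 * (norm \<Delta>)\<^sup>2)"
      by (simp add: power2_eq_square algebra_simps)
    also have "\<dots> \<le> H * (B\<^sup>2 * D)"
      using mult_left_mono[OF gain, of "B\<^sup>2"] by (simp add: algebra_simps)
    finally show ?thesis
      using H by (simp add: D_def)
  qed
qed

lemma norm_dphi_le:
  assumes "norm (\<phi> x yt) \<le> R" and "norm (\<phi> x y) \<le> R"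
  shows "norm (dphi \<phi> x yt y) \<le> 2 * R"
  using norm_triangle_ineq4[of "\<phi> x yt" "\<phi> x y"] assms by (simp add: dphi_def)

lemma sum_le_telescope:
  fixes h f :: "nat \<Rightarrow> real"
  assumes "\<forall>t\<in>{1..T}. h t \<le> f t - f (Suc t)" and "0 \<le> f (Suc T)"
  shows "(\<Sum>t=1..T. h t) \<le> f 1"
proof -
  have "(\<Sum>t=1..T. h t) \<le> (\<Sum>t=1..T. f t - f (Suc t))"
    using assms(1) by (intro sum_mono) blast
  also have "\<dots> = f 1 - f (Suc T)"
    using sum_Suc_diff[of 1 T "\<lambda>t. - f t"] by simp
  finally show ?thesis using assms(2) by simp
qed

lemma projections_stay_at_common_point:
  assumes "\<theta> 1 = p"
    and "\<forall>t\<ge>1. p \<in> C t \<and> (\<forall>z\<in>C t. norm (\<theta> (Suc t) - \<theta> t) \<le> norm (z - \<theta> t))"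
    and "1 \<le> t"
  shows "\<theta> t = p"
  using assms(3)
proof (induction t rule: dec_induct)
  case base
  show ?case by (fact assms(1))
next
  case (step t)
  with assms(2) have "norm (\<theta> (Suc t) - \<theta> t) \<le> norm (p - \<theta> t)" by blast
  with step.IH show ?case by simp
qed

theorem theorem2:
  fixes X :: "nat \<Rightarrow> 'x" and Y :: "'x \<Rightarrow> 'y set" and yc :: "nat \<Rightarrow> 'y"
    and \<phi> :: "'x \<Rightarrow> 'y \<Rightarrow> 'v::euclidean_space" and loss_fn :: "'y \<Rightarrow> 'y \<Rightarrow> real"
    and A R \<delta>s :: real and \<theta>s :: 'v and \<theta> :: "nat \<Rightarrow> 'v" and yhat :: "nat \<Rightarrow> 'y" and T :: nat
  assumes fin: "\<forall>t\<ge>1. finite (Y (X t))"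
    and corr: "\<forall>t\<ge>1. yc t \<in> Y (X t)"
    and lossb: "\<forall>a b. 0 \<le> loss_fn a b \<and> loss_fn a b \<le> A"
    and dpos: "\<delta>s > 0"
    and sep: "\<forall>t\<ge>1. \<forall>y\<in>Y (X t) - {yc t}. \<theta>s \<bullet> dphi \<phi> (X t) (yc t) y \<ge> \<delta>s"
    and bound: "\<forall>t\<ge>1. \<forall>y\<in>Y (X t). norm (\<phi> (X t) y) \<le> R"
    and init: "\<theta> 1 = 0"
    and pred: "\<forall>t\<ge>1. yhat t \<in> Y (X t) \<and>
                 (\<forall>y\<in>Y (X t). \<theta> t \<bullet> \<phi> (X t) y \<le> \<theta> t \<bullet> \<phi> (X t) (yhat t))"
    and upd: "\<forall>t\<ge>1. \<theta> (Suc t) \<in> feasible \<phi> (Y (X t)) (X t) (yc t) (loss_fn (yc t) (yhat t)) \<and>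
                 (\<forall>\<theta>'\<in>feasible \<phi> (Y (X t)) (X t) (yc t) (loss_fn (yc t) (yhat t)).
                    norm (\<theta> (Suc t) - \<theta> t) \<le> norm (\<theta>' - \<theta> t))"
  shows "(\<Sum>t=1..T. hinge_loss (loss_fn (yc t) (yhat t)) (\<theta> t) \<phi> (Y (X t)) (X t) (yc t))
           \<le> 8 * A * (R * norm \<theta>s / \<delta>s)^2"
proof -
  define H where "H t = hinge_loss (loss_fn (yc t) (yhat t)) (\<theta> t) \<phi> (Y (X t)) (X t) (yc t)" for t
  have A: "0 \<le> A"
    using lossb by (meson order_trans)
  show ?thesis
  proof (cases "A = 0")
    case True
    then have loss0: "loss_fn a b = 0" for a b
      using lossb by (meson antisym)
    have "\<theta> t = 0" if "1 \<le> t" for t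
      using projections_stay_at_common_point[where \<theta> = \<theta>
          and C = "\<lambda>t. feasible \<phi> (Y (X t)) (X t) (yc t) 0", OF init _ that] upd
      by (simp add: feasible_def loss0)
    then have "H t = 0" if "t \<in> {1..T}" for t
      using that by (simp add: H_def hinge_loss_zero loss0)
    then show ?thesis
      using True by (simp add: H_def)
  next
    case False
    define u where "u = (2 * A / \<delta>s) *\<^sub>R \<theta>s"
    have "2 * A * H t \<le> (2 * R)\<^sup>2 * ((norm (\<theta> t - u))\<^sup>2 - (norm (\<theta> (Suc t) - u))\<^sup>2)"
      if "t \<in> {1..T}" for t
    proof -
      have t: "1 \<le> t"
        using that by simp
      have "2 * A \<le> u \<bullet> dphi \<phi> (X t) (yc t) y" if "y \<in> Y (X t) - {yc t}" for y
        using mult_left_mono[OF sep[rule_format, OF t that], of "2 * A / \<delta>s"] A dpos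
        by (simp add: u_def)
      moreover have "norm (dphi \<phi> (X t) (yc t) y) \<le> 2 * R" if "y \<in> Y (X t)" for y
        using bound corr t that by (intro norm_dphi_le) auto
      moreover have "0 \<le> 2 * R"
        using bound corr t by (meson norm_ge_zero order_trans mult_nonneg_nonneg zero_le_numeral)
      ultimately show ?thesis
        unfolding H_def using upd t fin lossb by (intro hinge_loss_le_progress) auto
    qed
    then have "2 * A * (\<Sum>t=1..T. H t) \<le> (2 * R)\<^sup>2 * (norm u)\<^sup>2"
      using sum_le_telescope[of T "\<lambda>t. 2 * A * H t" "\<lambda>t. (2 * R)\<^sup>2 * (norm (\<theta> t - u))\<^sup>2"] init
      by (simp add: sum_distrib_left right_diff_distrib)
    also have "\<dots> = 2 * A * (8 * A * (R * norm \<theta>s / \<delta>s)\<^sup>2)"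
      using A dpos by (simp add: u_def field_simps power2_eq_square)
    finally show ?thesis
      using A False by (simp add: H_def mult_le_cancel_left_pos)
  qed
qed

end
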